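(* Let $C$ be a TDD respecting a vtree $T$, and let $h,h'$ be two twin $t_1$-nodes of $C$ for some non-root node $t_1$ of $T$. Then the circuit obtained from $C$ by contracting $h$ and $h'$ is again a TDD respecting $T$ and computes the same Boolean function as $C$.
   Context: A vtree over $X$ is a rooted tree whose internal nodes have exactly two ordered children and whose leaves are labeled bijectively by $X$; $X_t$ is the set of variables below node $t$. An nTDD $C=(N,E)$ respecting $T$ has nodes $N=\biguplus_t N_t$ ($t$-nodes); leaf $t$-nodes (leaf labeled $x$) carry a label in $\{x,\neg x,1,0\}$ and compute that literal/constant; an internal $t$-node $g$ with children $t_1,t_2$ has inputs $E(g)\subseteq N_{t_1}\times N_{t_2}$ and computes $f_g=\bigvee_{(g_1,g_2)\in E(g)}(f_{g_1}\wedge f_{g_2})$ over $X_t$ (false if $E(g)=\emptyset$); the distinguished root-node $\mathrm{out}$ gives $f_C=f_{\mathrm{out}}$. A TDD is an nTDD such that for every leaf $t$ labeled $x$, $N_t$ has at most one node labeled $x$, at most one labeled $\neg x$, at most one labeled $1$, and if one is labeled $1$ all others are labeled $0$; and for every internal $t$, distinct $t$-nodes have disjoint input sets. Twins: let $t_1$ be a non-root node of $T$ with parent $t$ and sibling $t_2$. For a $t_1$-node $h$ and a $t$-node $g$, $\mathrm{sib}_g(h)$ is the set of $t_2$-nodes $h_2$ such that the pair formed by $h$ and $h_2$ (in the order of the children of $t$) belongs to $E(g)$. Distinct $t_1$-nodes $h,h'$ are twins if $\mathrm{sib}_g(h)=\mathrm{sib}_g(h')$ for every $t$-node $g$. Contracting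 twins $h,h'$: replace them by a new $t_1$-node $v$ with $E(v)=E(h)\cup E(h')$ (so that $f_v=f_h\vee f_{h'}$); for every $t$-node $g$, replace each pair in $E(g)$ containing $h$ by the same pair with $v$ in place of $h$, and remove each pair containing $h'$. *)

theory Defs
  imports Main
begin

text \<open>A vtree: rooted binary tree with ordered children, leaves labelled by variables.
  Nodes of a vtree are identified with its subtrees (unambiguous since leaf labels are distinct).\<close>

datatype 'x vtree = Leaf 'x | Node "'x vtree" "'x vtree"

primrec vars :: "'x vtree \<Rightarrow> 'x set" where
  "vars (Leaf x) = {x}"
| "vars (Node l r) = vars l \<union> vars r"

primrec valid_vtree :: "'x vtree \<Rightarrow> bool" where
  "valid_vtree (Leaf x) = True"
| "valid_vtree (Node l r) = (valid_vtree l \<and> valid_vtree r \<and> vars l \<inter> vars r = {})"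

primrec subtrees :: "'x vtree \<Rightarrow> 'x vtree set" where
  "subtrees (Leaf x) = {Leaf x}"
| "subtrees (Node l r) = insert (Node l r) (subtrees l \<union> subtrees r)"

text \<open>Leaf labels, relative to the variable x of the leaf: x, not x, 1, 0.\<close>
datatype lit = Pos | Neg | One | Zero

record ('x, 'n) ntdd =
  nodes :: "'n set"
  tn    :: "'n \<Rightarrow> 'x vtree"          \<comment> \<open>the vtree node t such that g is a t-node\<close>
  lab   :: "'n \<Rightarrow> lit"              \<comment> \<open>label (meaningful for leaf t-nodes)\<close>
  inp   :: "'n \<Rightarrow> ('n \<times> 'n) set"
  out   :: "'n"

definition ntdd_respects :: "'x vtree \<Rightarrow> ('x, 'n) ntdd \<Rightarrow> bool" where
  "ntdd_respects T C \<longleftrightarrow>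
     valid_vtree T \<and> finite (nodes C) \<and> out C \<in> nodes C \<and> tn C (out C) = T \<and>
     (\<forall>g\<in>nodes C. tn C g \<in> subtrees T) \<and>
     (\<forall>g\<in>nodes C. (case tn C g of
         Leaf x \<Rightarrow> inp C g = {}
       | Node t1 t2 \<Rightarrow> inp C g \<subseteq> {g1\<in>nodes C. tn C g1 = t1} \<times> {g2\<in>nodes C. tn C g2 = t2}))"

primrec val :: "('x, 'n) ntdd \<Rightarrow> 'x vtree \<Rightarrow> 'n \<Rightarrow> ('x \<Rightarrow> bool) \<Rightarrow> bool" where
  "val C (Leaf x) g a = (case lab C g of Pos \<Rightarrow> a x | Neg \<Rightarrow> \<not> a x | One \<Rightarrow> True | Zero \<Rightarrow> False)"
| "val C (Node t1 t2) g a = (\<exists>(g1, g2)\<in>inp C g. val C t1 g1 a \<and> val C t2 g2 a)"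

definition fnode :: "('x, 'n) ntdd \<Rightarrow> 'n \<Rightarrow> ('x \<Rightarrow> bool) \<Rightarrow> bool" where
  "fnode C g = val C (tn C g) g"

definition fcirc :: "('x, 'n) ntdd \<Rightarrow> ('x \<Rightarrow> bool) \<Rightarrow> bool" where
  "fcirc C = fnode C (out C)"

definition is_TDD :: "'x vtree \<Rightarrow> ('x, 'n) ntdd \<Rightarrow> bool" where
  "is_TDD T C \<longleftrightarrow> ntdd_respects T C \<and>
     (\<forall>t\<in>subtrees T. (case t of
        Leaf x \<Rightarrow>
          (\<forall>l\<in>{Pos, Neg, One}. \<forall>g\<in>nodes C. \<forall>g'\<in>nodes C.
              tn C g = t \<and> tn C g' = t \<and> lab C g = l \<and> lab C g' = l \<longrightarrow> g = g') \<and>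
          ((\<exists>g\<in>nodes C. tn C g = t \<and> lab C g = One) \<longrightarrow>
              (\<forall>g\<in>nodes C. tn C g = t \<and> lab C g \<noteq> One \<longrightarrow> lab C g = Zero))
      | Node t1 t2 \<Rightarrow>
          (\<forall>g\<in>nodes C. \<forall>g'\<in>nodes C.
              tn C g = t \<and> tn C g' = t \<and> g \<noteq> g' \<longrightarrow> inp C g \<inter> inp C g' = {})))"

definition sib :: "('x, 'n) ntdd \<Rightarrow> 'n \<Rightarrow> 'n \<Rightarrow> 'n set" where
  "sib C g h = (case tn C g of
       Leaf _ \<Rightarrow> {}
     | Node l r \<Rightarrow> if tn C h = l then {h2. (h, h2) \<in> inp C g} else {h2. (h2, h) \<in> inp C g})"

definition twins :: "('x, 'n) ntdd \<Rightarrow> 'x vtree \<Rightarrow> 'n \<Rightarrow> 'n \<Rightarrow> bool" where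
  "twins C t1 h h' \<longleftrightarrow>
     h \<in> nodes C \<and> h' \<in> nodes C \<and> h \<noteq> h' \<and> tn C h = t1 \<and> tn C h' = t1 \<and>
     (\<forall>g\<in>nodes C. (\<exists>t2. tn C g = Node t1 t2 \<or> tn C g = Node t2 t1) \<longrightarrow>
          sib C g h = sib C g h')"

fun lit_or :: "lit \<Rightarrow> lit \<Rightarrow> lit" where
  "lit_or Zero l = l"
| "lit_or l Zero = l"
| "lit_or One _ = One"
| "lit_or _ One = One"
| "lit_or Pos Pos = Pos"
| "lit_or Neg Neg = Neg"
| "lit_or _ _ = One"

text \<open>Contraction of h and h': the new node v reuses the name h; h' is deleted.
  E(v) = E(h) \<union> E(h'); pairs containing h' are removed elsewhere (pairs containing h
  now refer to v). For leaf t1-nodes, v gets the label of f_h \<or> f_h'.\<close>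
definition contract :: "('x, 'n) ntdd \<Rightarrow> 'n \<Rightarrow> 'n \<Rightarrow> ('x, 'n) ntdd" where
  "contract C h h' = C\<lparr> nodes := nodes C - {h'},
       lab := (lab C)(h := lit_or (lab C h) (lab C h')),
       inp := (\<lambda>g. if g = h then inp C h \<union> inp C h'
                   else {p \<in> inp C g. fst p \<noteq> h' \<and> snd p \<noteq> h'}) \<rparr>"

end

(* Merging twins h, h' into one node v with inputs E(h) \<union> E(h') gives f_v = f_h \<or> f_h'.
   Because h and h' are twins, every gate reading one of them reads the other with the
   same partners, so it computes the same function whether it reads both h and h' or
   only v; by induction along the vtree no gate other than v changes its function.
   Determinism is a pairwise-disjointness condition: distinct t-nodes have disjoint input
   sets, and at a leaf, distinct t-nodes have literals with disjoint sets of satisfying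
   values (this is exactly the condition on leaf labels).  Contraction unites two members
   of such a family and shrinks the others, which keeps the family pairwise disjoint. *)

theory Submission
  imports Defs "HOL-Library.Disjoint_Sets"
begin

lemma valid_vtree_subtree: "valid_vtree T \<Longrightarrow> s \<in> subtrees T \<Longrightarrow> valid_vtree s"
  by (induction T) auto

lemma vars_nonempty: "vars t \<noteq> {}"
  by (induction t) auto

lemma valid_vtree_Node_neq: "valid_vtree (Node l r) \<Longrightarrow> l \<noteq> r"
  using vars_nonempty[of l] by auto

lemma Node_neq_left [simp]: "l \<noteq> Node l r"
  by (induction l arbitrary: r) auto

lemma Node_neq_right [simp]: "r \<noteq> Node l r"
  by (induction r arbitrary: l) auto

definition lit_val :: "lit \<Rightarrow> bool \<Rightarrow> bool" where
  "lit_val l v = (case l of Pos \<Rightarrow> v | Neg \<Rightarrow> \<not> v | One \<Rightarrow> True | Zero \<Rightarrow> False)"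

lemma val_Leaf: "val C (Leaf x) g a = lit_val (lab C g) (a x)"
  by (simp add: lit_val_def)

lemma lit_val_lit_or: "lit_val (lit_or l l') v \<longleftrightarrow> lit_val l v \<or> lit_val l' v"
  by (cases l; cases l') (auto simp: lit_val_def)

lemma lit_val_disjoint_iff:
  "Collect (lit_val l) \<inter> Collect (lit_val l') = {} \<longleftrightarrow>
     l = Zero \<or> l' = Zero \<or> (l, l') \<in> {(Pos, Neg), (Neg, Pos)}"
  by (cases l; cases l') (auto simp: lit_val_def)

lemma disjoint_family_on_merge:
  assumes "disjoint_family_on F N" and "h \<in> N \<Longrightarrow> h' \<in> N"
    and "\<And>g. g \<in> N - {h'} \<Longrightarrow> G g \<subseteq> (F(h := F h \<union> F h')) g"
  shows "disjoint_family_on G (N - {h'})"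
  unfolding disjoint_family_on_def
proof (intro ballI impI)
  fix g g' assume g: "g \<in> N - {h'}" "g' \<in> N - {h'}" "g \<noteq> g'"
  have "(F(h := F h \<union> F h')) g \<inter> (F(h := F h \<union> F h')) g' = {}"
    using g assms(2) disjoint_family_onD[OF assms(1)] by (cases "g = h"; cases "g' = h") auto
  with g assms(3) show "G g \<inter> G g' = {}"
    by blast
qed

lemma bex_pairs_merge:
  assumes "h \<noteq> h'"
    and sat_fst: "\<And>x y. (x, y) \<in> S \<Longrightarrow> x \<in> {h, h'} \<Longrightarrow> (h, y) \<in> S \<and> (h', y) \<in> S"
    and sat_snd: "\<And>x y. (x, y) \<in> S \<Longrightarrow> y \<in> {h, h'} \<Longrightarrow> (x, h) \<in> S \<and> (x, h') \<in> S"
  shows "(\<exists>(x, y)\<in>{p \<in> S. fst p \<noteq> h' \<and> snd p \<noteq> h'}. (P(h := P h \<or> P h')) x \<and> (Q(h := Q h \<or> Q h')) y)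
     \<longleftrightarrow> (\<exists>(x, y)\<in>S. P x \<and> Q y)" (is "?merged \<longleftrightarrow> ?orig")
proof
  assume ?merged
  then obtain x y where xy: "(x, y) \<in> S" "(P(h := P h \<or> P h')) x" "(Q(h := Q h \<or> Q h')) y"
    by auto
  then obtain x0 where x0: "(x0, y) \<in> S" "P x0"
    using sat_fst by (cases "x = h") auto
  then obtain y0 where "(x0, y0) \<in> S" "Q y0"
    using xy(3) sat_snd by (cases "y = h") auto
  with x0 show ?orig
    by blast
next
  assume ?orig
  then obtain x y where xy: "(x, y) \<in> S" "P x" "Q y"
    by blast
  define x0 where "x0 = (if x = h' then h else x)"
  define y0 where "y0 = (if y = h' then h else y)"
  have "(x0, y) \<in> S"
    using xy(1) sat_fst[OF xy(1)] unfolding x0_def by auto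
  then have "(x0, y0) \<in> S"
    using sat_snd unfolding y0_def by auto
  moreover have "x0 \<noteq> h'" "y0 \<noteq> h'"
    using \<open>h \<noteq> h'\<close> unfolding x0_def y0_def by auto
  moreover have "(P(h := P h \<or> P h')) x0" "(Q(h := Q h \<or> Q h')) y0"
    using xy unfolding x0_def y0_def by auto
  ultimately show ?merged
    by (intro bexI[of _ "(x0, y0)"]) auto
qed

lemma contract_simps [simp]:
  "nodes (contract C h h') = nodes C - {h'}"
  "tn (contract C h h') = tn C"
  "lab (contract C h h') = (lab C)(h := lit_or (lab C h) (lab C h'))"
  "out (contract C h h') = out C"
  by (simp_all add: contract_def)

lemma inp_contract:
  "inp (contract C h h') g = (if g = h then inp C h \<union> inp C h'
                              else {p \<in> inp C g. fst p \<noteq> h' \<and> snd p \<noteq> h'})"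
  by (simp add: contract_def)

lemma ntdd_respects_valid_vtree:
  "ntdd_respects T C \<Longrightarrow> g \<in> nodes C \<Longrightarrow> valid_vtree (tn C g)"
  unfolding ntdd_respects_def using valid_vtree_subtree by blast

lemma ntdd_respects_inp:
  assumes "ntdd_respects T C" "g \<in> nodes C"
  shows "case tn C g of Leaf x \<Rightarrow> inp C g = {}
           | Node l r \<Rightarrow> inp C g \<subseteq> {x \<in> nodes C. tn C x = l} \<times> {y \<in> nodes C. tn C y = r}"
  using assms unfolding ntdd_respects_def by blast

lemma ntdd_respects_inp_Leaf:
  "ntdd_respects T C \<Longrightarrow> g \<in> nodes C \<Longrightarrow> tn C g = Leaf x \<Longrightarrow> inp C g = {}"
  using ntdd_respects_inp[of T C g] by simp

lemma ntdd_respects_inpD: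
  assumes "ntdd_respects T C" "g \<in> nodes C" "tn C g = Node l r" "(x, y) \<in> inp C g"
  shows "x \<in> nodes C" "tn C x = l" "y \<in> nodes C" "tn C y = r"
  using ntdd_respects_inp[OF assms(1,2)] assms(3,4) by auto

lemma inp_contractD:
  assumes resp: "ntdd_respects T C" and "h \<in> nodes C" "h' \<in> nodes C" "tn C h = tn C h'"
    and g: "g \<in> nodes C - {h'}" "tn C g = Node l r" and xy: "(x, y) \<in> inp (contract C h h') g"
  shows "x \<in> nodes C - {h'}" "tn C x = l" "y \<in> nodes C - {h'}" "tn C y = r"
proof -
  have "x \<in> nodes C \<and> tn C x = l \<and> y \<in> nodes C \<and> tn C y = r \<and> x \<noteq> h' \<and> y \<noteq> h'"
  proof (cases "g = h")
    case True
    with xy have "(x, y) \<in> inp C h \<union> inp C h'"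
      by (simp add: inp_contract)
    moreover have "tn C h = Node l r" "tn C h' = Node l r"
      using True g assms(4) by simp_all
    ultimately show ?thesis
      using assms(2,3) ntdd_respects_inpD[OF resp, of h l r x y] ntdd_respects_inpD[OF resp, of h' l r x y]
      by auto
  next
    case False
    with xy have "(x, y) \<in> inp C g" "x \<noteq> h'" "y \<noteq> h'"
      by (simp_all add: inp_contract)
    then show ?thesis
      using g ntdd_respects_inpD[OF resp, of g l r x y] by simp
  qed
  then show "x \<in> nodes C - {h'}" "tn C x = l" "y \<in> nodes C - {h'}" "tn C y = r"
    by auto
qed

lemma ntdd_respects_contract:
  assumes resp: "ntdd_respects T C" and hh': "h \<in> nodes C" "h' \<in> nodes C" "tn C h = tn C h'"
    and "h' \<noteq> out C"
  shows "ntdd_respects T (contract C h h')"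
proof -
  have "case tn C g of Leaf x \<Rightarrow> inp (contract C h h') g = {}
          | Node l r \<Rightarrow> inp (contract C h h') g \<subseteq>
              {x \<in> nodes C - {h'}. tn C x = l} \<times> {y \<in> nodes C - {h'}. tn C y = r}"
    if g: "g \<in> nodes C - {h'}" for g
  proof (cases "tn C g")
    case (Leaf x)
    then have "inp C g = {}" "g = h \<Longrightarrow> inp C h' = {}"
      using g hh' ntdd_respects_inp_Leaf[OF resp] by auto
    with Leaf show ?thesis
      by (cases "g = h") (simp_all add: inp_contract)
  next
    case (Node l r)
    then show ?thesis
      using inp_contractD[OF resp hh' g Node] by (simp, intro subrelI) blast
  qed
  moreover have "valid_vtree T" "finite (nodes C)" "out C \<in> nodes C" "tn C (out C) = T"
    "\<forall>g\<in>nodes C. tn C g \<in> subtrees T"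
    using resp unfolding ntdd_respects_def by auto
  ultimately show ?thesis
    using \<open>h' \<noteq> out C\<close> unfolding ntdd_respects_def contract_simps by blast
qed

lemma twins_sib_eq:
  "twins C t1 h h' \<Longrightarrow> g \<in> nodes C \<Longrightarrow> tn C g = Node l r \<Longrightarrow> t1 \<in> {l, r} \<Longrightarrow>
     sib C g h = sib C g h'"
  unfolding twins_def by blast

lemma twins_inp_fst:
  assumes resp: "ntdd_respects T C" and tw: "twins C t1 h h'" and g: "g \<in> nodes C"
    and xy: "(x, y) \<in> inp C g" "x \<in> {h, h'}"
  shows "(h, y) \<in> inp C g \<and> (h', y) \<in> inp C g"
proof -
  obtain l r where lr: "tn C g = Node l r"
    using xy(1) ntdd_respects_inp_Leaf[OF resp g] by (cases "tn C g") auto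
  have "tn C h = l" "tn C h' = l" "t1 = l"
    using tw xy ntdd_respects_inpD(2)[OF resp g lr xy(1)] unfolding twins_def by auto
  then have "{z. (h, z) \<in> inp C g} = {z. (h', z) \<in> inp C g}"
    using twins_sib_eq[OF tw g lr] lr unfolding sib_def by simp
  with xy show ?thesis
    by blast
qed

lemma twins_inp_snd:
  assumes resp: "ntdd_respects T C" and tw: "twins C t1 h h'" and g: "g \<in> nodes C"
    and xy: "(x, y) \<in> inp C g" "y \<in> {h, h'}"
  shows "(x, h) \<in> inp C g \<and> (x, h') \<in> inp C g"
proof -
  obtain l r where lr: "tn C g = Node l r"
    using xy(1) ntdd_respects_inp_Leaf[OF resp g] by (cases "tn C g") auto
  have "l \<noteq> r"
    using ntdd_respects_valid_vtree[OF resp g] lr valid_vtree_Node_neq by simp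
  moreover have "tn C h = r" "tn C h' = r" "t1 = r"
    using tw xy ntdd_respects_inpD(4)[OF resp g lr xy(1)] unfolding twins_def by auto
  ultimately have "{z. (z, h) \<in> inp C g} = {z. (z, h') \<in> inp C g}"
    using twins_sib_eq[OF tw g lr] lr unfolding sib_def by simp
  with xy show ?thesis
    by blast
qed

lemma val_contract:
  assumes resp: "ntdd_respects T C" and tw: "twins C t1 h h'"
    and "g \<in> nodes C - {h'}" "tn C g = t"
  shows "val (contract C h h') t g a = ((\<lambda>x. val C t x a)(h := val C t h a \<or> val C t h' a)) g"
  using assms(3,4)
proof (induction t arbitrary: g)
  case (Leaf x)
  then show ?case
    by (simp del: val.simps add: val_Leaf lit_val_lit_or)
next
  case (Node l r)
  let ?C' = "contract C h h'"
  let ?M = "\<lambda>t. (\<lambda>x. val C t x a)(h := val C t h a \<or> val C t h' a)"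
  have hh': "h \<in> nodes C" "h' \<in> nodes C" "h \<noteq> h'" "tn C h = t1" "tn C h' = t1"
    using tw unfolding twins_def by auto
  have children_val: "(case p of (x, y) \<Rightarrow> val ?C' l x a \<and> val ?C' r y a) = (case p of (x, y) \<Rightarrow> ?M l x \<and> ?M r y)"
    if "p \<in> inp ?C' g" for p
    using inp_contractD[OF resp hh'(1,2) _ Node.prems, of "fst p" "snd p"] that hh' Node.IH
    by (cases p) simp
  have "val ?C' (Node l r) g a = (\<exists>(x, y)\<in>inp ?C' g. ?M l x \<and> ?M r y)"
    unfolding val.simps(2) by (rule bex_cong[OF refl children_val])
  also have "\<dots> = ?M (Node l r) g"
  proof (cases "g = h")
    case True
    have "(case p of (x, y) \<Rightarrow> ?M l x \<and> ?M r y) = (case p of (x, y) \<Rightarrow> val C l x a \<and> val C r y a)"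
      if "p \<in> inp C h \<union> inp C h'" for p
      using that inp_contractD[OF resp hh'(1,2) _ Node.prems, of "fst p" "snd p"] hh' True Node.prems
      by (cases p) (auto simp: inp_contract)
    then have "(\<exists>(x, y)\<in>inp C h \<union> inp C h'. ?M l x \<and> ?M r y)
        = (\<exists>(x, y)\<in>inp C h \<union> inp C h'. val C l x a \<and> val C r y a)"
      by (rule bex_cong[OF refl])
    with True show ?thesis
      by (simp add: inp_contract bex_Un)
  next
    case False
    have "g \<in> nodes C"
      using Node.prems by simp
    then have "(\<exists>(x, y)\<in>{p \<in> inp C g. fst p \<noteq> h' \<and> snd p \<noteq> h'}. ?M l x \<and> ?M r y)
        \<longleftrightarrow> (\<exists>(x, y)\<in>inp C g. val C l x a \<and> val C r y a)"
      using bex_pairs_merge[OF hh'(3), of "inp C g" "\<lambda>x. val C l x a" "\<lambda>y. val C r y a"]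
        twins_inp_fst[OF resp tw] twins_inp_snd[OF resp tw] by blast
    with False show ?thesis
      by (simp add: inp_contract)
  qed
  finally show ?case .
qed

lemma fcirc_contract:
  assumes resp: "ntdd_respects T C" and tw: "twins C t1 h h'" and "t1 \<noteq> T"
  shows "fcirc (contract C h h') = fcirc C"
proof
  fix a
  have out: "out C \<in> nodes C - {h'}" "out C \<noteq> h" "tn C (out C) = T"
    using resp tw \<open>t1 \<noteq> T\<close> unfolding ntdd_respects_def twins_def by auto
  show "fcirc (contract C h h') a = fcirc C a"
    using val_contract[OF resp tw out(1,3), of a] out(2,3) by (simp add: fcirc_def fnode_def)
qed

definition tnodes :: "('x, 'n) ntdd \<Rightarrow> 'x vtree \<Rightarrow> 'n set" where
  "tnodes C t = {g \<in> nodes C. tn C g = t}"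

lemma leaf_labels_iff_disjoint_family:
  fixes lb :: "'n \<Rightarrow> lit"
  shows "((\<forall>l\<in>{Pos, Neg, One}. \<forall>g\<in>N. \<forall>g'\<in>N. lb g = l \<and> lb g' = l \<longrightarrow> g = g') \<and>
          ((\<exists>g\<in>N. lb g = One) \<longrightarrow> (\<forall>g\<in>N. lb g \<noteq> One \<longrightarrow> lb g = Zero)))
     \<longleftrightarrow> disjoint_family_on (\<lambda>g. Collect (lit_val (lb g))) N" (is "?U \<and> ?O \<longleftrightarrow> _")
proof -
  have "?U \<and> ?O \<longleftrightarrow> (\<forall>g\<in>N. \<forall>g'\<in>N. g \<noteq> g' \<longrightarrow>
          lb g = Zero \<or> lb g' = Zero \<or> (lb g, lb g') \<in> {(Pos, Neg), (Neg, Pos)})" (is "_ \<longleftrightarrow> ?D")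
  proof
    assume "?U \<and> ?O"
    then have U: ?U and O: ?O
      by blast+
    show ?D
    proof (intro ballI impI)
      fix g g' assume g: "g \<in> N" "g' \<in> N" "g \<noteq> g'"
      have "lb g = lb g' \<Longrightarrow> lb g = Zero"
        using U g by (cases "lb g") auto
      moreover have "lb g = One \<Longrightarrow> lb g' = Zero" "lb g' = One \<Longrightarrow> lb g = Zero"
        using U O g by (cases "lb g = lb g'"; auto)+
      ultimately show "lb g = Zero \<or> lb g' = Zero \<or> (lb g, lb g') \<in> {(Pos, Neg), (Neg, Pos)}"
        by (cases "lb g"; cases "lb g'") auto
    qed
  next
    assume ?D
    then show "?U \<and> ?O"
      by fastforce
  qed
  then show ?thesis
    unfolding disjoint_family_on_def lit_val_disjoint_iff .
qed

lemma is_TDD_iff_disjoint_families: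
  "is_TDD T C \<longleftrightarrow> ntdd_respects T C \<and>
     (\<forall>t\<in>subtrees T. case t of
        Leaf x \<Rightarrow> disjoint_family_on (\<lambda>g. Collect (lit_val (lab C g))) (tnodes C t)
      | Node l r \<Rightarrow> disjoint_family_on (inp C) (tnodes C t))"
proof -
  have "(\<forall>l\<in>{Pos, Neg, One}. \<forall>g\<in>nodes C. \<forall>g'\<in>nodes C.
            tn C g = t \<and> tn C g' = t \<and> lab C g = l \<and> lab C g' = l \<longrightarrow> g = g') \<and>
        ((\<exists>g\<in>nodes C. tn C g = t \<and> lab C g = One) \<longrightarrow>
            (\<forall>g\<in>nodes C. tn C g = t \<and> lab C g \<noteq> One \<longrightarrow> lab C g = Zero))
    \<longleftrightarrow> disjoint_family_on (\<lambda>g. Collect (lit_val (lab C g))) (tnodes C t)" for t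
    unfolding leaf_labels_iff_disjoint_family[symmetric] tnodes_def by blast
  moreover have "(\<forall>g\<in>nodes C. \<forall>g'\<in>nodes C. tn C g = t \<and> tn C g' = t \<and> g \<noteq> g' \<longrightarrow>
          inp C g \<inter> inp C g' = {})
    \<longleftrightarrow> disjoint_family_on (inp C) (tnodes C t)" for t
    unfolding disjoint_family_on_def tnodes_def by blast
  ultimately show ?thesis
    unfolding is_TDD_def by (simp split: vtree.split)
qed

lemma is_TDD_contract:
  assumes TDD: "is_TDD T C" and tw: "twins C t1 h h'" and "t1 \<noteq> T"
  shows "is_TDD T (contract C h h')"
proof -
  let ?C' = "contract C h h'"
  have resp: "ntdd_respects T C"
    using TDD unfolding is_TDD_def by blast
  have hh': "h \<in> nodes C" "h' \<in> nodes C" "tn C h = t1" "tn C h' = t1"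
    using tw unfolding twins_def by auto
  then have "h' \<noteq> out C"
    using resp \<open>t1 \<noteq> T\<close> unfolding ntdd_respects_def by auto
  have tnodes_contract: "tnodes ?C' t = tnodes C t - {h'}" for t
    by (auto simp: tnodes_def)
  have h_tnodes: "h \<in> tnodes C t \<Longrightarrow> h' \<in> tnodes C t" for t
    using hh' by (simp add: tnodes_def)
  have "case t of
          Leaf x \<Rightarrow> disjoint_family_on (\<lambda>g. Collect (lit_val (lab ?C' g))) (tnodes ?C' t)
        | Node l r \<Rightarrow> disjoint_family_on (inp ?C') (tnodes ?C' t)"
    if t: "t \<in> subtrees T" for t
  proof (cases t)
    case (Leaf x)
    with TDD t have "disjoint_family_on (\<lambda>g. Collect (lit_val (lab C g))) (tnodes C t)"
      unfolding is_TDD_iff_disjoint_families by fastforce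
    then have "disjoint_family_on (\<lambda>g. Collect (lit_val (lab ?C' g))) (tnodes C t - {h'})"
      by (rule disjoint_family_on_merge[OF _ h_tnodes]) (auto simp: lit_val_lit_or)
    with Leaf show ?thesis
      by (simp add: tnodes_contract)
  next
    case (Node l r)
    with TDD t have "disjoint_family_on (inp C) (tnodes C t)"
      unfolding is_TDD_iff_disjoint_families by fastforce
    then have "disjoint_family_on (inp ?C') (tnodes C t - {h'})"
      by (rule disjoint_family_on_merge[OF _ h_tnodes]) (auto simp: inp_contract)
    with Node show ?thesis
      by (simp add: tnodes_contract)
  qed
  with ntdd_respects_contract[OF resp hh'(1,2) _ \<open>h' \<noteq> out C\<close>] hh' show ?thesis
    unfolding is_TDD_iff_disjoint_families by simp
qed

theorem lemma5:
  fixes T :: "'x vtree" and C :: "('x, 'n) ntdd" and t1 :: "'x vtree" and h h' :: 'n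
  assumes "is_TDD T C"
    and "t1 \<in> subtrees T" and "t1 \<noteq> T"
    and "twins C t1 h h'"
  shows "is_TDD T (contract C h h') \<and> fcirc (contract C h h') = fcirc C"
proof -
  have "ntdd_respects T C"
    using assms(1) unfolding is_TDD_def by blast
  then show ?thesis
    using is_TDD_contract[OF assms(1,4,3)] fcirc_contract[OF _ assms(4,3)] by blast
qed

end
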